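(* Let $A_1A_2A_3$ be a triangle in a Euclidean space $\mathbb{R}^n$, $n\ge2$, with angles $\alpha_k$ at $A_k$. For $0\le t_1\le1$ let $P=(1-t_1)A_1+t_1A_2$, and let $Q$ be the foot of the corresponding circumcevian, i.e. the point other than $A_3$ where the ray from $A_3$ through $P$ meets the circumcircle of the triangle. Then $Q=\frac{m_1A_1+m_2A_2+m_3A_3}{m_1+m_2+m_3}$ with $m_1=\{\sin^2\alpha_2+t_1\sin(\alpha_1-\alpha_2)\sin\alpha_3\}(1-t_1)$, $m_2=\{\sin^2\alpha_2+t_1\sin(\alpha_1-\alpha_2)\sin\alpha_3\}t_1$, $m_3=-(1-t_1)t_1\sin^2\alpha_3$.
   Context: Barycentric coordinates with respect to the (affinely independent) vertices $A_1,A_2,A_3$; they are homogeneous. *)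

theory Defs
  imports "HOL-Analysis.Analysis"
begin

definition vangle :: "'a::euclidean_space \<Rightarrow> 'a \<Rightarrow> real" where
  "vangle u v = arccos ((u \<bullet> v) / (norm u * norm v))"

definition tri_angle :: "'a::euclidean_space \<Rightarrow> 'a \<Rightarrow> 'a \<Rightarrow> real" where
  "tri_angle a b c = vangle (a - b) (c - b)"

definition circumcircle :: "'a::euclidean_space \<Rightarrow> 'a \<Rightarrow> 'a \<Rightarrow> 'a set" where
  "circumcircle A1 A2 A3 =
     {X. X \<in> affine hull {A1, A2, A3} \<and>
         (\<exists>C \<in> affine hull {A1, A2, A3}.
            dist C A1 = dist C A2 \<and> dist C A2 = dist C A3 \<and> dist C X = dist C A1)}"

end

theory Submission
  imports Defs
begin

text \<open>Write a = |A2 A3|, b = |A1 A3|, c = |A1 A2| and Q = A3 + s (P - A3). Since the circumcentre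
  is equidistant from A3 and Q, the secant computation gives
  s |A3 P|^2 = (1 - t) b^2 + t a^2 =: N, while Stewart's theorem gives
  |A3 P|^2 = N - t (1 - t) c^2. Hence Q has homogeneous barycentric coordinates
  (N (1 - t), N t, - t (1 - t) c^2). By the law of sines and
  sin (\<alpha>1 - \<alpha>2) c^2 = (a^2 - b^2) sin \<alpha>3, the stated weights are these coordinates
  multiplied by (sin \<alpha>3 / c)^2.\<close>

definition gram :: "'a::real_inner \<Rightarrow> 'a \<Rightarrow> real" where
  "gram u v = (u \<bullet> u) * (v \<bullet> v) - (u \<bullet> v)\<^sup>2"

lemma gram_pos:
  fixes u v :: "'a::real_inner"
  assumes "\<not> collinear {0, u, v}"
  shows "gram u v > 0"
proof -
  have "\<bar>u \<bullet> v\<bar> < norm u * norm v"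
    using assms norm_cauchy_schwarz_equal Cauchy_Schwarz_ineq2 by (metis order_le_less)
  then have "\<bar>u \<bullet> v\<bar>\<^sup>2 < (norm u * norm v)\<^sup>2"
    by (intro power_strict_mono) auto
  then show ?thesis
    by (simp add: gram_def power_mult_distrib power2_norm_eq_inner)
qed

lemma gram_commute: "gram u v = gram v u"
  by (simp add: gram_def inner_commute)

lemma gram_diff_vertex:
  fixes a b c :: "'a::real_inner"
  shows "gram (a - b) (c - b) = gram (a - c) (b - c)"
  unfolding gram_def power2_eq_square
  by (simp add: inner_diff_left inner_diff_right inner_commute algebra_simps)

lemma abs_inner_div_norms_le_1:
  fixes u v :: "'a::real_inner"
  shows "\<bar>(u \<bullet> v) / (norm u * norm v)\<bar> \<le> 1"
  using Cauchy_Schwarz_ineq2[of u v] by (auto simp: abs_divide divide_le_eq_1)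

lemma cos_vangle:
  fixes u v :: "'a::euclidean_space"
  assumes "u \<noteq> 0" "v \<noteq> 0"
  shows "cos (vangle u v) * (norm u * norm v) = u \<bullet> v"
  using assms by (simp add: vangle_def cos_arccos_abs[OF abs_inner_div_norms_le_1])

lemma sin_vangle:
  fixes u v :: "'a::euclidean_space"
  assumes "u \<noteq> 0" "v \<noteq> 0"
  shows "sin (vangle u v) * (norm u * norm v) = sqrt (gram u v)"
proof -
  have "sin (vangle u v) = sqrt (1 - ((u \<bullet> v) / (norm u * norm v))\<^sup>2)"
    by (simp add: vangle_def sin_arccos_abs[OF abs_inner_div_norms_le_1])
  also have "1 - ((u \<bullet> v) / (norm u * norm v))\<^sup>2 = gram u v / (norm u * norm v)\<^sup>2"
  proof -
    have "gram u v = (norm u * norm v)\<^sup>2 - (u \<bullet> v)\<^sup>2"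
      by (simp add: gram_def power_mult_distrib power2_norm_eq_inner)
    then show ?thesis
      using assms by (simp add: field_simps)
  qed
  finally show ?thesis
    using assms by (simp add: real_sqrt_divide)
qed

lemma cos_tri_angle:
  fixes a b c :: "'a::euclidean_space"
  assumes "a \<noteq> b" "c \<noteq> b"
  shows "2 * cos (tri_angle a b c) * (dist a b * dist c b)
           = (dist a b)\<^sup>2 + (dist c b)\<^sup>2 - (dist a c)\<^sup>2"
proof -
  have "a - c = (a - b) - (c - b)"
    by simp
  then have "(dist a c)\<^sup>2 = (dist a b)\<^sup>2 + (dist c b)\<^sup>2 - 2 * ((a - b) \<bullet> (c - b))"
    by (simp add: dist_norm power2_norm_eq_inner inner_diff_left inner_diff_right inner_commute)
  moreover have "cos (tri_angle a b c) * (dist a b * dist c b) = (a - b) \<bullet> (c - b)"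
    using assms by (simp add: tri_angle_def dist_norm cos_vangle)
  ultimately show ?thesis
    by simp
qed

lemma sin_tri_angle:
  fixes a b c :: "'a::euclidean_space"
  assumes "a \<noteq> b" "c \<noteq> b"
  shows "sin (tri_angle a b c) * (dist a b * dist c b) = sqrt (gram (a - b) (c - b))"
  using assms by (simp add: tri_angle_def dist_norm sin_vangle)

lemma sin_tri_angle_pos:
  fixes a b c :: "'a::euclidean_space"
  assumes "\<not> collinear {a, b, c}"
  shows "sin (tri_angle a b c) > 0"
proof -
  have "a \<noteq> b" "c \<noteq> b"
    using assms by (auto simp: collinear_2 insert_commute)
  moreover have "gram (a - b) (c - b) > 0"
    using assms gram_pos[of "a - b" "c - b"] collinear_3[of a b c] by simp
  ultimately have "sin (tri_angle a b c) * (dist a b * dist c b) > 0"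
    by (simp add: sin_tri_angle)
  moreover have "dist a b * dist c b > 0"
    using \<open>a \<noteq> b\<close> \<open>c \<noteq> b\<close> by simp
  ultimately show ?thesis
    by (rule zero_less_mult_pos2)
qed

lemma law_of_sines:
  fixes a b c :: "'a::euclidean_space"
  assumes "\<not> collinear {a, b, c}"
  shows "sin (tri_angle a b c) * dist a b = sin (tri_angle a c b) * dist a c"
proof -
  have distinct: "a \<noteq> b" "a \<noteq> c" "b \<noteq> c"
    using assms by (auto simp: collinear_2 insert_commute)
  have "sin (tri_angle a b c) * dist a b * dist b c = sqrt (gram (a - b) (c - b))"
    using distinct sin_tri_angle[of a b c] by (simp add: dist_commute mult.assoc)
  also have "\<dots> = sin (tri_angle a c b) * dist a c * dist b c"
    using distinct sin_tri_angle[of a c b] by (simp add: gram_diff_vertex mult.assoc)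
  finally show ?thesis
    using distinct by simp
qed

lemma sin_diff_tri_angles:
  fixes a b c :: "'a::euclidean_space"
  assumes "\<not> collinear {a, b, c}"
  shows "sin (tri_angle b a c - tri_angle a b c) * (dist a b)\<^sup>2
           = ((dist b c)\<^sup>2 - (dist a c)\<^sup>2) * sin (tri_angle a c b)"
proof -
  have distinct: "a \<noteq> b" "a \<noteq> c" "b \<noteq> c"
    using assms by (auto simp: collinear_2 insert_commute)
  define p q r where "p = dist a b" and "q = dist a c" and "r = dist b c"
  define \<Gamma> where "\<Gamma> = sqrt (gram (a - c) (b - c))"
  have pos: "p > 0" "q > 0" "r > 0"
    using distinct by (simp_all add: p_def q_def r_def)
  have "sin (tri_angle b a c) * (p * q) = \<Gamma>"
    using distinct sin_tri_angle[of b a c] gram_diff_vertex[of b a c]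
    by (simp add: p_def q_def \<Gamma>_def dist_commute gram_commute)
  then have sin1: "sin (tri_angle b a c) = \<Gamma> / (p * q)"
    using pos by (simp add: field_simps)
  have "sin (tri_angle a b c) * (p * r) = \<Gamma>"
    using distinct sin_tri_angle[of a b c] gram_diff_vertex[of a b c]
    by (simp add: p_def r_def \<Gamma>_def dist_commute)
  then have sin2: "sin (tri_angle a b c) = \<Gamma> / (p * r)"
    using pos by (simp add: field_simps)
  have "sin (tri_angle a c b) * (q * r) = \<Gamma>"
    using distinct sin_tri_angle[of a c b] by (simp add: q_def r_def \<Gamma>_def dist_commute)
  then have sin3: "sin (tri_angle a c b) = \<Gamma> / (q * r)"
    using pos by (simp add: field_simps)
  have "2 * cos (tri_angle b a c) * (p * q) = p\<^sup>2 + q\<^sup>2 - r\<^sup>2"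
    using distinct cos_tri_angle[of b a c] by (simp add: p_def q_def r_def dist_commute)
  then have cos1: "cos (tri_angle b a c) = (p\<^sup>2 + q\<^sup>2 - r\<^sup>2) / (2 * p * q)"
    using pos by (simp add: field_simps)
  have "2 * cos (tri_angle a b c) * (p * r) = p\<^sup>2 + r\<^sup>2 - q\<^sup>2"
    using distinct cos_tri_angle[of a b c] by (simp add: p_def q_def r_def dist_commute)
  then have cos2: "cos (tri_angle a b c) = (p\<^sup>2 + r\<^sup>2 - q\<^sup>2) / (2 * p * r)"
    using pos by (simp add: field_simps)
  show ?thesis
    unfolding sin_diff sin1 sin2 sin3 cos1 cos2 p_def[symmetric] q_def[symmetric] r_def[symmetric]
    using pos by (simp add: field_simps power2_eq_square)
qed

lemma circumcevian_weight_factor: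
  fixes A1 A2 A3 :: "'a::euclidean_space" and t :: real
  assumes "\<not> collinear {A1, A2, A3}"
  defines "\<alpha>1 \<equiv> tri_angle A2 A1 A3" and "\<alpha>2 \<equiv> tri_angle A1 A2 A3" and "\<alpha>3 \<equiv> tri_angle A1 A3 A2"
  shows "(sin \<alpha>2)\<^sup>2 + t * sin (\<alpha>1 - \<alpha>2) * sin \<alpha>3
           = (sin \<alpha>3 / dist A1 A2)\<^sup>2 * ((1 - t) * (dist A1 A3)\<^sup>2 + t * (dist A2 A3)\<^sup>2)"
proof -
  have "A1 \<noteq> A2"
    using assms(1) by (auto simp: collinear_2)
  then have p: "dist A1 A2 > 0"
    by simp
  have sin2: "sin \<alpha>2 = sin \<alpha>3 * dist A1 A3 / dist A1 A2"
    using law_of_sines[OF assms(1)] p by (simp add: \<alpha>2_def \<alpha>3_def field_simps)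
  have sin12: "sin (\<alpha>1 - \<alpha>2) = ((dist A2 A3)\<^sup>2 - (dist A1 A3)\<^sup>2) * sin \<alpha>3 / (dist A1 A2)\<^sup>2"
    using sin_diff_tri_angles[OF assms(1)] p by (simp add: \<alpha>1_def \<alpha>2_def \<alpha>3_def field_simps)
  show ?thesis
    unfolding sin2 sin12 using p by (simp add: field_simps power2_eq_square)
qed

lemma stewart:
  fixes u v :: "'a::real_inner"
  shows "(norm ((1 - t) *\<^sub>R u + t *\<^sub>R v))\<^sup>2
           = (1 - t) * (norm u)\<^sup>2 + t * (norm v)\<^sup>2 - t * (1 - t) * (norm (u - v))\<^sup>2"
  unfolding power2_norm_eq_inner
  by (simp add: inner_add_left inner_add_right inner_diff_left inner_diff_right inner_commute
      algebra_simps)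

lemma sphere_secant_parameter:
  fixes A C d :: "'a::real_inner"
  assumes "dist C (A + s *\<^sub>R d) = dist C A" "s \<noteq> 0"
  shows "s * (d \<bullet> d) = 2 * ((C - A) \<bullet> d)"
proof -
  have "(C - A - s *\<^sub>R d) \<bullet> (C - A - s *\<^sub>R d) = (C - A) \<bullet> (C - A)"
    using assms(1) by (simp add: dist_norm diff_diff_eq power2_norm_eq_inner[symmetric])
  then have "s * (s * (d \<bullet> d) - 2 * ((C - A) \<bullet> d)) = 0"
    by (simp add: inner_diff_left inner_diff_right inner_commute algebra_simps)
  then show ?thesis
    using assms(2) by simp
qed

lemma circumcevian_parameter:
  fixes A1 A2 A3 P Q :: "'a::euclidean_space"
  assumes "Q \<in> circumcircle A1 A2 A3" "Q = A3 + s *\<^sub>R (P - A3)" "Q \<noteq> A3"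
    and "P = (1 - t) *\<^sub>R A1 + t *\<^sub>R A2"
  shows "s * (dist P A3)\<^sup>2 = (1 - t) * (dist A1 A3)\<^sup>2 + t * (dist A2 A3)\<^sup>2"
proof -
  obtain C where C: "dist C A1 = dist C A3" "dist C A2 = dist C A3" "dist C Q = dist C A3"
    using assms(1) unfolding circumcircle_def by auto
  have "s \<noteq> 0"
    using assms(2,3) by auto
  then have "s * (dist P A3)\<^sup>2 = 2 * ((C - A3) \<bullet> (P - A3))"
    using sphere_secant_parameter[of C A3 s "P - A3"] C(3) assms(2)
    by (simp add: dist_norm power2_norm_eq_inner)
  also have "P - A3 = (1 - t) *\<^sub>R (A1 - A3) + t *\<^sub>R (A2 - A3)"
    using assms(4) by (simp add: algebra_simps)
  also have "2 * ((C - A3) \<bullet> \<dots>)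
      = (1 - t) * (2 * ((C - A3) \<bullet> (A1 - A3))) + t * (2 * ((C - A3) \<bullet> (A2 - A3)))"
    by (simp add: inner_add_right algebra_simps)
  also have "\<dots> = (1 - t) * (dist A1 A3)\<^sup>2 + t * (dist A2 A3)\<^sup>2"
    using sphere_secant_parameter[of C A3 1 "A1 - A3"] sphere_secant_parameter[of C A3 1 "A2 - A3"] C
    by (simp add: dist_norm power2_norm_eq_inner)
  finally show ?thesis .
qed

lemma circumcevian_foot:
  fixes A1 A2 A3 P Q :: "'a::euclidean_space"
  assumes "Q \<in> circumcircle A1 A2 A3" "Q = A3 + s *\<^sub>R (P - A3)" "Q \<noteq> A3"
    and P: "P = (1 - t) *\<^sub>R A1 + t *\<^sub>R A2"
    and N_def: "N = (1 - t) * (dist A1 A3)\<^sup>2 + t * (dist A2 A3)\<^sup>2"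
    and D_def: "D = N - t * (1 - t) * (dist A1 A2)\<^sup>2"
  shows "D > 0" and "Q = A3 + (N / D) *\<^sub>R (P - A3)"
proof -
  have "P - A3 = (1 - t) *\<^sub>R (A1 - A3) + t *\<^sub>R (A2 - A3)"
    using P by (simp add: algebra_simps)
  then have D: "D = (dist P A3)\<^sup>2"
    using stewart[of t "A1 - A3" "A2 - A3"] by (simp add: D_def N_def dist_norm)
  show "D > 0"
    using assms(2,3) by (auto simp: D)
  moreover have "s * D = N"
    using circumcevian_parameter[OF assms(1-4)] by (simp add: D N_def)
  ultimately have "s = N / D"
    by (simp add: field_simps)
  then show "Q = A3 + (N / D) *\<^sub>R (P - A3)"
    using assms(2) by simp
qed

lemma cevian_point_homogeneous_barycentric:
  fixes A1 A2 A3 :: "'a::real_vector"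
  assumes "D \<noteq> 0" "k \<noteq> 0"
  shows "A3 + (N / D) *\<^sub>R ((1 - t) *\<^sub>R A1 + t *\<^sub>R A2 - A3)
           = (1 / (k * N * (1 - t) + k * N * t + k * (D - N)))
               *\<^sub>R ((k * N * (1 - t)) *\<^sub>R A1 + (k * N * t) *\<^sub>R A2 + (k * (D - N)) *\<^sub>R A3)"
proof -
  have "(k * D) *\<^sub>R (A3 + (N / D) *\<^sub>R ((1 - t) *\<^sub>R A1 + t *\<^sub>R A2 - A3))
      = (k * D) *\<^sub>R A3 + (k * N) *\<^sub>R ((1 - t) *\<^sub>R A1 + t *\<^sub>R A2 - A3)"
    using assms(1) by (simp add: scaleR_add_right)
  also have "\<dots> = (k * N * (1 - t)) *\<^sub>R A1 + (k * N * t) *\<^sub>R A2 + (k * (D - N)) *\<^sub>R A3"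
    by (simp add: algebra_simps)
  finally show ?thesis
    using assms by (simp add: algebra_simps)
qed

theorem mainTheorem19:
  fixes A1 A2 A3 P Q :: "real ^ 'n" and t1 :: real
  assumes dim: "CARD('n) \<ge> 2"
    and tri: "\<not> collinear {A1, A2, A3}"
    and t1: "0 \<le> t1" "t1 \<le> 1"
    and P: "P = (1 - t1) *\<^sub>R A1 + t1 *\<^sub>R A2"
    and Q_ray: "\<exists>s\<ge>0. Q = A3 + s *\<^sub>R (P - A3)"
    and Q_circ: "Q \<in> circumcircle A1 A2 A3"
    and Q_ne: "Q \<noteq> A3"
  shows "let \<alpha>1 = tri_angle A2 A1 A3; \<alpha>2 = tri_angle A1 A2 A3; \<alpha>3 = tri_angle A1 A3 A2;
             m1 = ((sin \<alpha>2)\<^sup>2 + t1 * sin (\<alpha>1 - \<alpha>2) * sin \<alpha>3) * (1 - t1);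
             m2 = ((sin \<alpha>2)\<^sup>2 + t1 * sin (\<alpha>1 - \<alpha>2) * sin \<alpha>3) * t1;
             m3 = - (1 - t1) * t1 * (sin \<alpha>3)\<^sup>2
         in Q = (1 / (m1 + m2 + m3)) *\<^sub>R (m1 *\<^sub>R A1 + m2 *\<^sub>R A2 + m3 *\<^sub>R A3)"
proof -
  define \<alpha>1 \<alpha>2 \<alpha>3 where "\<alpha>1 = tri_angle A2 A1 A3" and "\<alpha>2 = tri_angle A1 A2 A3"
    and "\<alpha>3 = tri_angle A1 A3 A2"
  define c where "c = dist A1 A2"
  define k where "k = (sin \<alpha>3 / c)\<^sup>2"
  define N where "N = (1 - t1) * (dist A1 A3)\<^sup>2 + t1 * (dist A2 A3)\<^sup>2"
  define D where "D = N - t1 * (1 - t1) * c\<^sup>2"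
  obtain s where "Q = A3 + s *\<^sub>R (P - A3)"
    using Q_ray by blast
  from circumcevian_foot[OF Q_circ this Q_ne P N_def D_def[unfolded c_def]]
  have "D > 0" "Q = A3 + (N / D) *\<^sub>R (P - A3)" .
  have "sin \<alpha>3 > 0" "c > 0"
    using tri sin_tri_angle_pos[of A1 A3 A2]
    by (auto simp: \<alpha>3_def c_def insert_commute collinear_2)
  then have "k \<noteq> 0"
    by (simp add: k_def)
  have weights: "(sin \<alpha>2)\<^sup>2 + t1 * sin (\<alpha>1 - \<alpha>2) * sin \<alpha>3 = k * N"
    "- (1 - t1) * t1 * (sin \<alpha>3)\<^sup>2 = k * (D - N)"
    using circumcevian_weight_factor[OF tri, of t1] \<open>c > 0\<close>
    by (simp_all add: \<alpha>1_def \<alpha>2_def \<alpha>3_def k_def N_def D_def c_def power_divide field_simps)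
  show ?thesis
    using cevian_point_homogeneous_barycentric[OF \<open>D > 0\<close>[THEN dual_order.strict_implies_not_eq] \<open>k \<noteq> 0\<close>]
    unfolding Let_def \<alpha>1_def[symmetric] \<alpha>2_def[symmetric] \<alpha>3_def[symmetric] weights
    by (simp add: \<open>Q = A3 + (N / D) *\<^sub>R (P - A3)\<close> P mult.assoc)
qed

end
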